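(* Let $\mathcal I$ be an admissible analytic $P$-ideal on $\mathbb N$. If $A\in\mathcal{I}\mathcal{A}$ and $G$ is the subgroup of $\mathbb T$ generated by $A$, then $G\in\mathcal{I}\mathcal{A}$.
   Context: $\mathbb T=\mathbb R/\mathbb Z$ identified with $[0,1]$ (0 and 1 identified), with addition mod 1; $\|x\|$ is the distance from $x$ to the nearest integer. An ideal $\mathcal I$ on $\mathbb N$ is a nonempty family of subsets of $\mathbb N$ closed under finite unions and subsets with $\mathbb N\notin\mathcal I$; admissible means all singletons belong to it; $P$-ideal means for every sequence $(A_n)$ in $\mathcal I$ there is $A\in\mathcal I$ with $A_n\setminus A$ finite for all $n$; analytic means analytic as a subset of $2^{\mathbb N}$. A sequence $(x_n)$ $\mathcal I$-converges to $x$ if for every open $U\ni x$, $\{n:x_n\notin U\}\in\mathcal I$. A set $X\subseteq[0,1]$ is $\mathcal I$-Arbault if there is an increasing sequence of naturals $(a_n)$ such that $\|a_nx\|$ $\mathcal I$-converges to $0$ for every $x\in X$; $\mathcal{I}\mathcal{A}$ denotes the family of all such sets. *)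

theory Defs
  imports "HOL-Analysis.Analysis"
begin

definition is_ideal :: "nat set set \<Rightarrow> bool" where
  "is_ideal I \<longleftrightarrow> I \<noteq> {} \<and> (\<forall>A\<in>I. \<forall>B\<in>I. A \<union> B \<in> I)
      \<and> (\<forall>A\<in>I. \<forall>B. B \<subseteq> A \<longrightarrow> B \<in> I) \<and> UNIV \<notin> I"

definition admissible_ideal :: "nat set set \<Rightarrow> bool" where
  "admissible_ideal I \<longleftrightarrow> (\<forall>n. {n} \<in> I)"

definition P_ideal :: "nat set set \<Rightarrow> bool" where
  "P_ideal I \<longleftrightarrow> (\<forall>As :: nat \<Rightarrow> nat set. (\<forall>n. As n \<in> I) \<longrightarrow>
      (\<exists>A\<in>I. \<forall>n. finite (As n - A)))"

definition analytic_set :: "'a::topological_space set \<Rightarrow> bool" where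
  "analytic_set S \<longleftrightarrow> S = {} \<or>
     (\<exists>f :: (nat \<Rightarrow> nat) \<Rightarrow> 'a. continuous_on UNIV f \<and> range f = S)"

text \<open>An ideal is analytic if it is analytic as a subset of the Cantor space 2^N,
  subsets of N being identified with their characteristic functions nat => bool.\<close>
definition analytic_ideal :: "nat set set \<Rightarrow> bool" where
  "analytic_ideal I \<longleftrightarrow> analytic_set ((\<lambda>A. (\<lambda>n. n \<in> A)) ` I)"

definition I_convergent :: "nat set set \<Rightarrow> (nat \<Rightarrow> 'a::topological_space) \<Rightarrow> 'a \<Rightarrow> bool" where
  "I_convergent I x l \<longleftrightarrow> (\<forall>U. open U \<and> l \<in> U \<longrightarrow> {n. x n \<notin> U} \<in> I)"

definition dist_int :: "real \<Rightarrow> real" where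
  "dist_int x = \<bar>x - of_int (round x)\<bar>"

definition I_Arbault :: "nat set set \<Rightarrow> real set \<Rightarrow> bool" where
  "I_Arbault I X \<longleftrightarrow> X \<subseteq> {0..1} \<and>
     (\<exists>a :: nat \<Rightarrow> nat. strict_mono a \<and>
        (\<forall>x\<in>X. I_convergent I (\<lambda>n. dist_int (real (a n) * x)) 0))"

text \<open>Subgroup of T = R/Z generated by A, viewed as a subset of [0,1]
  (with 0 and 1 identified): all points of [0,1] congruent mod 1 to a finite
  integer combination of elements of A.\<close>
definition T_subgroup_generated :: "real set \<Rightarrow> real set" where
  "T_subgroup_generated A = {x \<in> {0..1}. \<exists>S k. finite S \<and> S \<subseteq> A \<and>
       x - (\<Sum>s\<in>S. of_int (k s) * s) \<in> \<int>}"

end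

theory Submission
  imports Defs
begin

text \<open>If \<open>x \<equiv> \<Sum> k\<^sub>s s (mod 1)\<close> with \<open>s \<in> A\<close>, then \<open>\<parallel>a\<^sub>n x\<parallel> \<le> \<Sum> \<bar>k\<^sub>s\<bar> \<parallel>a\<^sub>n s\<parallel>\<close>,
  so the set where \<open>\<parallel>a\<^sub>n x\<parallel> \<ge> \<epsilon>\<close> lies in the finite union of the sets where
  \<open>\<parallel>a\<^sub>n s\<parallel> \<ge> \<epsilon>/K\<close>, and ideals are closed under finite unions. Thus the sequence
  witnessing that \<open>A\<close> is \<open>\<I>\<close>-Arbault also works for the generated subgroup; only the
  ideal axioms are needed, not admissibility, analyticity or the P-property.\<close>

lemma ideal_empty: "is_ideal I \<Longrightarrow> {} \<in> I"
  unfolding is_ideal_def by blast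

lemma ideal_subset: "is_ideal I \<Longrightarrow> A \<in> I \<Longrightarrow> B \<subseteq> A \<Longrightarrow> B \<in> I"
  unfolding is_ideal_def by blast

lemma ideal_finite_UN:
  assumes "is_ideal I" "finite S" "\<And>s. s \<in> S \<Longrightarrow> B s \<in> I"
  shows "(\<Union>s\<in>S. B s) \<in> I"
  using assms(2,3)
proof (induction S rule: finite_induct)
  case empty
  then show ?case using ideal_empty[OF assms(1)] by simp
next
  case (insert x F)
  then show ?case using assms(1) unfolding is_ideal_def by simp
qed

lemma I_convergent_iff_dist:
  fixes f :: "nat \<Rightarrow> 'a::metric_space"
  assumes "is_ideal I"
  shows "I_convergent I f l \<longleftrightarrow> (\<forall>e>0. {n. e \<le> dist (f n) l} \<in> I)"
proof
  assume conv: "I_convergent I f l"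
  show "\<forall>e>0. {n. e \<le> dist (f n) l} \<in> I"
  proof (intro allI impI)
    fix e :: real
    assume "e > 0"
    then have "{n. f n \<notin> ball l e} \<in> I"
      using conv unfolding I_convergent_def by (meson open_ball centre_in_ball)
    moreover have "{n. f n \<notin> ball l e} = {n. e \<le> dist (f n) l}"
      by (auto simp: dist_commute)
    ultimately show "{n. e \<le> dist (f n) l} \<in> I"
      by simp
  qed
next
  assume small: "\<forall>e>0. {n. e \<le> dist (f n) l} \<in> I"
  show "I_convergent I f l"
    unfolding I_convergent_def
  proof (intro allI impI)
    fix U
    assume "open U \<and> l \<in> U"
    then obtain e where "e > 0" "ball l e \<subseteq> U"
      using open_contains_ball by blast
    then have "{n. f n \<notin> U} \<subseteq> {n. e \<le> dist (f n) l}"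
      by (auto simp: dist_commute not_less)
    then show "{n. f n \<notin> U} \<in> I"
      using ideal_subset[OF assms] small \<open>e > 0\<close> by blast
  qed
qed

lemma I_convergent_zero_dominated:
  fixes f :: "nat \<Rightarrow> real" and g :: "'s \<Rightarrow> nat \<Rightarrow> real"
  assumes "is_ideal I" "finite S"
    and g: "\<And>s. s \<in> S \<Longrightarrow> I_convergent I (g s) 0"
    and c: "\<And>s. s \<in> S \<Longrightarrow> c s \<ge> 0"
    and dom: "\<And>n. \<bar>f n\<bar> \<le> (\<Sum>s\<in>S. c s * \<bar>g s n\<bar>)"
  shows "I_convergent I f 0"
  unfolding I_convergent_iff_dist[OF assms(1)] dist_real_def diff_0_right
proof (intro allI impI)
  fix e :: real
  assume "e > 0"
  define K where "K = 1 + (\<Sum>s\<in>S. c s)"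
  have "(\<Sum>s\<in>S. c s) < K" "K > 0"
    unfolding K_def using sum_nonneg[of S c] c by auto
  have "{n. e \<le> \<bar>f n\<bar>} \<subseteq> (\<Union>s\<in>S. {n. e / K \<le> \<bar>g s n\<bar>})"
  proof (rule subsetI, rule ccontr)
    fix n
    assume "n \<in> {n. e \<le> \<bar>f n\<bar>}" and "n \<notin> (\<Union>s\<in>S. {n. e / K \<le> \<bar>g s n\<bar>})"
    then have "e \<le> \<bar>f n\<bar>" and small: "\<And>s. s \<in> S \<Longrightarrow> \<bar>g s n\<bar> \<le> e / K"
      by auto
    have "\<bar>f n\<bar> \<le> (\<Sum>s\<in>S. c s * \<bar>g s n\<bar>)"
      by (rule dom)
    also have "\<dots> \<le> (\<Sum>s\<in>S. c s * (e / K))"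
      by (intro sum_mono mult_left_mono small c)
    also have "\<dots> = (\<Sum>s\<in>S. c s) * (e / K)"
      by (rule sum_distrib_right[symmetric])
    also have "\<dots> < K * (e / K)"
      using \<open>(\<Sum>s\<in>S. c s) < K\<close> \<open>K > 0\<close> \<open>e > 0\<close> by (intro mult_strict_right_mono) auto
    also have "\<dots> = e"
      using \<open>K > 0\<close> by simp
    finally show False
      using \<open>e \<le> \<bar>f n\<bar>\<close> by simp
  qed
  moreover have "(\<Union>s\<in>S. {n. e / K \<le> \<bar>g s n\<bar>}) \<in> I"
    using g \<open>e > 0\<close> \<open>K > 0\<close>
    by (intro ideal_finite_UN[OF assms(1,2)]) (simp add: I_convergent_iff_dist[OF assms(1)] dist_real_def)
  ultimately show "{n. e \<le> \<bar>f n\<bar>} \<in> I"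
    using ideal_subset[OF assms(1)] by blast
qed

lemma dist_int_nonneg: "dist_int x \<ge> 0"
  unfolding dist_int_def by simp

lemma dist_int_le: "dist_int x \<le> \<bar>x - of_int m\<bar>"
  unfolding dist_int_def by (rule round_diff_minimal)

lemma dist_int_int_combination_le:
  assumes "finite S"
  shows "dist_int (of_int m + (\<Sum>s\<in>S. of_int (k s) * y s))
           \<le> (\<Sum>s\<in>S. \<bar>of_int (k s)\<bar> * dist_int (y s))"
proof -
  let ?r = "\<lambda>s. y s - of_int (round (y s))"
  have "of_int m + (\<Sum>s\<in>S. of_int (k s) * y s) - of_int (m + (\<Sum>s\<in>S. k s * round (y s)))
          = (\<Sum>s\<in>S. of_int (k s) * ?r s)"
    by (simp add: algebra_simps sum_subtractf)
  then have "dist_int (of_int m + (\<Sum>s\<in>S. of_int (k s) * y s)) \<le> \<bar>\<Sum>s\<in>S. of_int (k s) * ?r s\<bar>"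
    by (metis dist_int_le)
  also have "\<dots> \<le> (\<Sum>s\<in>S. \<bar>of_int (k s) * ?r s\<bar>)"
    by (rule sum_abs)
  also have "\<dots> = (\<Sum>s\<in>S. \<bar>of_int (k s)\<bar> * dist_int (y s))"
    by (simp add: abs_mult dist_int_def)
  finally show ?thesis .
qed

lemma I_convergent_dist_int_int_combination:
  assumes "is_ideal I" "finite S" "S \<subseteq> A"
    and A: "\<And>s. s \<in> A \<Longrightarrow> I_convergent I (\<lambda>n. dist_int (real (a n) * s)) 0"
    and x: "x - (\<Sum>s\<in>S. of_int (k s) * s) \<in> \<int>"
  shows "I_convergent I (\<lambda>n. dist_int (real (a n) * x)) 0"
proof (rule I_convergent_zero_dominated[OF assms(1,2), where c = "\<lambda>s. \<bar>of_int (k s)\<bar>"])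
  show "I_convergent I (\<lambda>n. dist_int (real (a n) * s)) 0" if "s \<in> S" for s
    using A \<open>S \<subseteq> A\<close> that by blast
  obtain m where "x - (\<Sum>s\<in>S. of_int (k s) * s) = of_int m"
    using x by (elim Ints_cases)
  then have m: "x = of_int m + (\<Sum>s\<in>S. of_int (k s) * s)"
    by simp
  fix n
  have "real (a n) * x = of_int (int (a n) * m) + (\<Sum>s\<in>S. of_int (k s) * (real (a n) * s))"
    unfolding m by (simp add: algebra_simps sum_distrib_left)
  then have "dist_int (real (a n) * x) \<le> (\<Sum>s\<in>S. \<bar>of_int (k s)\<bar> * dist_int (real (a n) * s))"
    using dist_int_int_combination_le[OF assms(2), of "int (a n) * m" k "\<lambda>s. real (a n) * s"]
    by simp
  then show "\<bar>dist_int (real (a n) * x)\<bar>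
      \<le> (\<Sum>s\<in>S. \<bar>of_int (k s)\<bar> * \<bar>dist_int (real (a n) * s)\<bar>)"
    by (simp add: dist_int_nonneg)
qed simp

theorem proposition3p4:
  fixes I :: "nat set set" and A :: "real set"
  assumes "is_ideal I" and "admissible_ideal I" and "analytic_ideal I" and "P_ideal I"
    and "I_Arbault I A"
  shows "I_Arbault I (T_subgroup_generated A)"
proof -
  obtain a where "strict_mono a"
    and A: "\<And>s. s \<in> A \<Longrightarrow> I_convergent I (\<lambda>n. dist_int (real (a n) * s)) 0"
    using assms(5) unfolding I_Arbault_def by blast
  have "I_convergent I (\<lambda>n. dist_int (real (a n) * x)) 0" if "x \<in> T_subgroup_generated A" for x
    using that I_convergent_dist_int_int_combination[OF assms(1) _ _ A]
    unfolding T_subgroup_generated_def by blast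
  moreover have "T_subgroup_generated A \<subseteq> {0..1}"
    unfolding T_subgroup_generated_def by blast
  ultimately show ?thesis
    unfolding I_Arbault_def using \<open>strict_mono a\<close> by blast
qed

end
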